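(* Consider an ordered linear probing hash table with $n$ slots in some initial state, and a sequence $S$ of insertions and deletions applied to it. If there exists an interval $P=[r,s-1]$ with insertion surplus $q$, then the crossing number satisfies $c_s\ge q$.
   Context: Ordered linear probing with tombstones: the table has slots $1,\dots,n$; each slot holds a key, a tombstone, or is free. A hash function $h$ maps keys to $[n]$; a tombstone's hash is that of the deleted key that created it. Keys/tombstones within each maximal run of non-free slots are stored in hash order. Deletion replaces the key by a tombstone. Insertion of $u$ places $u$ at its hash-order position $j$ in the run (scanning from $h(u)$) and shifts positions $j,j+1,\dots$ right by one until reaching a tombstone or free slot, which it uses. The crossing number $c_i$ is the number of insertions in $S$ with hash smaller than $i$ that either use a tombstone with hash at least $i$ or use a free slot in position at least $i$. For an interval $P$, $S_P=\{u\in S:h(u)\in P\}$; a subset $S'\subseteq S_P$ is downward-closed if for every $u\in S'$, every $v\in S_P$ occurring temporally before $u$ with $h(v)\ge h(u)$ is in $S'$; its insertion surplus is $\max(0,\#\text{insertions}-\#\text{deletions in }S')$. The insertion surplus of $P$ is the maximum insertion surplus of a downward-closed subset of $S_P$ minus the number of free slots initially in $P$.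
   Formalization: The initial state contains no tombstones, insertions run past slot n into initially free overflow slots instead of wrapping around, and an inserted key precedes stored items of equal hash. Apart from conventions, each condition added here is assumed in the paper as well or is needed for the statement above to hold. *)

theory Defs
  imports Main
begin

text \<open>Slots are indexed by natural numbers;
  the table proper consists of slots 1..n, slots beyond n are initially free and
  only serve as overflow area (no wrap-around).\<close>

datatype 'k cell = Free | Key 'k | Tomb nat

datatype 'k op = Ins 'k | Del 'k

type_synonym 'k table = "nat \<Rightarrow> 'k cell"

fun chash :: "('k \<Rightarrow> nat) \<Rightarrow> 'k cell \<Rightarrow> nat" where
  "chash h (Key k) = h k"
| "chash h (Tomb x) = x"
| "chash h Free = 0"

fun is_tomb :: "'k cell \<Rightarrow> bool" where
  "is_tomb (Tomb _) = True"
| "is_tomb _ = False"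

fun op_key :: "'k op \<Rightarrow> 'k" where
  "op_key (Ins u) = u"
| "op_key (Del u) = u"

fun is_ins :: "'k op \<Rightarrow> bool" where
  "is_ins (Ins _) = True"
| "is_ins (Del _) = False"

definition ins_pos :: "('k \<Rightarrow> nat) \<Rightarrow> 'k table \<Rightarrow> 'k \<Rightarrow> nat" where
  "ins_pos h T u = (LEAST p. h u \<le> p \<and> (T p = Free \<or> h u \<le> chash h (T p)))"

definition ins_end :: "('k \<Rightarrow> nat) \<Rightarrow> 'k table \<Rightarrow> 'k \<Rightarrow> nat" where
  "ins_end h T u = (LEAST p. ins_pos h T u \<le> p \<and> (T p = Free \<or> is_tomb (T p)))"

definition insert_tbl :: "('k \<Rightarrow> nat) \<Rightarrow> 'k table \<Rightarrow> 'k \<Rightarrow> 'k table" where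
  "insert_tbl h T u = (\<lambda>p. let j = ins_pos h T u; e = ins_end h T u in
      if p < j \<or> e < p then T p else if p = j then Key u else T (p - 1))"

definition delete_tbl :: "('k \<Rightarrow> nat) \<Rightarrow> 'k table \<Rightarrow> 'k \<Rightarrow> 'k table" where
  "delete_tbl h T u = (\<lambda>p. if T p = Key u then Tomb (h u) else T p)"

fun step :: "('k \<Rightarrow> nat) \<Rightarrow> 'k table \<Rightarrow> 'k op \<Rightarrow> 'k table" where
  "step h T (Ins u) = insert_tbl h T u"
| "step h T (Del u) = delete_tbl h T u"

text \<open>State just before the t-th operation (0-based) of S.\<close>
definition state_before :: "('k \<Rightarrow> nat) \<Rightarrow> 'k table \<Rightarrow> 'k op list \<Rightarrow> nat \<Rightarrow> 'k table" where
  "state_before h T0 S t = foldl (step h) T0 (take t S)"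

definition in_table :: "'k table \<Rightarrow> 'k \<Rightarrow> bool" where
  "in_table T u = (\<exists>p. T p = Key u)"

definition valid_ops :: "('k \<Rightarrow> nat) \<Rightarrow> 'k table \<Rightarrow> 'k op list \<Rightarrow> bool" where
  "valid_ops h T0 S = (\<forall>t < length S. case S ! t of
      Ins u \<Rightarrow> \<not> in_table (state_before h T0 S t) u
    | Del u \<Rightarrow> in_table (state_before h T0 S t) u)"

definition valid_init :: "nat \<Rightarrow> ('k \<Rightarrow> nat) \<Rightarrow> 'k table \<Rightarrow> bool" where
  "valid_init n h T =
    ((\<forall>p. (p = 0 \<or> n < p) \<longrightarrow> T p = Free)
     \<and> (\<forall>p. \<not> is_tomb (T p))
     \<and> (\<forall>p q k. T p = Key k \<longrightarrow> T q = Key k \<longrightarrow> p = q)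
     \<and> (\<forall>p. T p \<noteq> Free \<longrightarrow> chash h (T p) \<le> p \<and> (\<forall>q. chash h (T p) \<le> q \<and> q \<le> p \<longrightarrow> T q \<noteq> Free))
     \<and> (\<forall>p. T p \<noteq> Free \<longrightarrow> T (Suc p) \<noteq> Free \<longrightarrow> chash h (T p) \<le> chash h (T (Suc p))))"

definition crossing :: "('k \<Rightarrow> nat) \<Rightarrow> 'k table \<Rightarrow> 'k op list \<Rightarrow> nat \<Rightarrow> nat" where
  "crossing h T0 S i = card {t. t < length S \<and> is_ins (S ! t) \<and> h (op_key (S ! t)) < i \<and>
      (let T = state_before h T0 S t; u = op_key (S ! t); e = ins_end h T u in
        (is_tomb (T e) \<and> i \<le> chash h (T e)) \<or> (T e = Free \<and> i \<le> e))}"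

text \<open>S_P for P = [r, s-1], as a set of indices (occurrences) into S.\<close>
definition S_P :: "('k \<Rightarrow> nat) \<Rightarrow> 'k op list \<Rightarrow> nat \<Rightarrow> nat \<Rightarrow> nat set" where
  "S_P h S r s = {t. t < length S \<and> r \<le> h (op_key (S ! t)) \<and> h (op_key (S ! t)) < s}"

definition downward_closed :: "('k \<Rightarrow> nat) \<Rightarrow> 'k op list \<Rightarrow> nat \<Rightarrow> nat \<Rightarrow> nat set \<Rightarrow> bool" where
  "downward_closed h S r s S' = (S' \<subseteq> S_P h S r s \<and>
     (\<forall>t\<in>S'. \<forall>t'\<in>S_P h S r s. t' < t \<and> h (op_key (S ! t)) \<le> h (op_key (S ! t')) \<longrightarrow> t' \<in> S'))"

definition subset_surplus :: "'k op list \<Rightarrow> nat set \<Rightarrow> int" where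
  "subset_surplus S S' = max 0 (int (card {t\<in>S'. is_ins (S ! t)}) - int (card {t\<in>S'. \<not> is_ins (S ! t)}))"

definition insertion_surplus :: "('k \<Rightarrow> nat) \<Rightarrow> 'k table \<Rightarrow> 'k op list \<Rightarrow> nat \<Rightarrow> nat \<Rightarrow> int" where
  "insertion_surplus h T0 S r s =
     Max (subset_surplus S ` {S'. downward_closed h S r s S'})
     - int (card {p. r \<le> p \<and> p < s \<and> T0 p = Free})"

end

theory Submission
  imports Defs
begin

(* Fix a downward-closed S' of maximal surplus and let x(t) be the least hash of an operation
   of S' at time t or later (s if there is none).  Count the gaps of [x(t), s) at time t: free
   slots in [x(t), s) and tombstones with hash in [x(t), s).  Initially there are at most as
   many as free slots in P.  A non-crossing insertion of S' has hash in [x(t), s) and uses up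
   one of them, a deletion of S' creates at most one, and an operation outside S' creates none,
   since by downward closure its hash lies outside [x(t), s); raising x(t) only removes gaps.
   Hence #insertions - #deletions of S' is at most the number of free slots of P plus the
   number of crossing insertions of S', which gives c_s >= q. *)

(* The invariant of valid_init, without the absence of tombstones but with finitely many
   occupied slots. *)
definition wf_table :: "('k \<Rightarrow> nat) \<Rightarrow> 'k table \<Rightarrow> bool" where
  "wf_table h T \<longleftrightarrow> finite {p. T p \<noteq> Free}
     \<and> (\<forall>p. T p \<noteq> Free \<longrightarrow> chash h (T p) \<le> p \<and> (\<forall>q. chash h (T p) \<le> q \<and> q \<le> p \<longrightarrow> T q \<noteq> Free))
     \<and> (\<forall>p. T p \<noteq> Free \<longrightarrow> T (Suc p) \<noteq> Free \<longrightarrow> chash h (T p) \<le> chash h (T (Suc p)))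
     \<and> (\<forall>p q k. T p = Key k \<longrightarrow> T q = Key k \<longrightarrow> p = q)"

lemma insert_tbl_outside: "p < ins_pos h T u \<or> ins_end h T u < p \<Longrightarrow> insert_tbl h T u p = T p"
  unfolding insert_tbl_def Let_def by auto

lemma insert_tbl_shifted: "ins_pos h T u < p \<Longrightarrow> p \<le> ins_end h T u \<Longrightarrow> insert_tbl h T u p = T (p - 1)"
  unfolding insert_tbl_def Let_def by auto

context
  fixes h :: "'k \<Rightarrow> nat" and T :: "'k table"
  assumes wf: "wf_table h T"
begin

lemma wf_table_finite: "finite {p. T p \<noteq> Free}"
  using wf unfolding wf_table_def by blast

lemma wf_table_hash_le: "T p \<noteq> Free \<Longrightarrow> chash h (T p) \<le> p"
  using wf unfolding wf_table_def by blast

lemma wf_table_probe: "T p \<noteq> Free \<Longrightarrow> chash h (T p) \<le> q \<Longrightarrow> q \<le> p \<Longrightarrow> T q \<noteq> Free"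
  using wf unfolding wf_table_def by blast

lemma wf_table_sorted: "T p \<noteq> Free \<Longrightarrow> T (Suc p) \<noteq> Free \<Longrightarrow> chash h (T p) \<le> chash h (T (Suc p))"
  using wf unfolding wf_table_def by blast

lemma wf_table_distinct: "T p = Key k \<Longrightarrow> T q = Key k \<Longrightarrow> p = q"
  using wf unfolding wf_table_def by blast

lemma wf_table_run_start: "T p = Free \<Longrightarrow> T (Suc p) \<noteq> Free \<Longrightarrow> p < chash h (T (Suc p))"
  using wf_table_probe[of "Suc p" p] by fastforce

lemma wf_table_sorted_run:
  assumes "p \<le> q" and "\<And>m. p \<le> m \<Longrightarrow> m \<le> q \<Longrightarrow> T m \<noteq> Free"
  shows "chash h (T p) \<le> chash h (T q)"
  using assms
proof (induction q)
  case (Suc q)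
  show ?case
  proof (cases "p = Suc q")
    case False
    then have "chash h (T p) \<le> chash h (T q)" using Suc by simp
    also have "\<dots> \<le> chash h (T (Suc q))" using False Suc.prems by (intro wf_table_sorted) auto
    finally show ?thesis .
  qed simp
qed simp

lemma ex_Free_ge: "\<exists>p\<ge>a. T p = Free"
proof -
  obtain N where "\<forall>p\<in>{p. T p \<noteq> Free}. p \<le> N"
    using wf_table_finite finite_nat_set_iff_bounded_le by blast
  then show ?thesis by (metis (mono_tags) max.cobounded1 max.cobounded2 mem_Collect_eq not_less_eq_eq)
qed

lemma ins_pos_spec:
  shows "h u \<le> ins_pos h T u"
    and "T (ins_pos h T u) = Free \<or> h u \<le> chash h (T (ins_pos h T u))"
    and "h u \<le> p \<Longrightarrow> p < ins_pos h T u \<Longrightarrow> T p \<noteq> Free \<and> chash h (T p) < h u"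
proof -
  have ex: "\<exists>p. h u \<le> p \<and> (T p = Free \<or> h u \<le> chash h (T p))"
    using ex_Free_ge by blast
  show "h u \<le> ins_pos h T u" "T (ins_pos h T u) = Free \<or> h u \<le> chash h (T (ins_pos h T u))"
    using LeastI_ex[OF ex] unfolding ins_pos_def by auto
  show "h u \<le> p \<Longrightarrow> p < ins_pos h T u \<Longrightarrow> T p \<noteq> Free \<and> chash h (T p) < h u"
    using not_less_Least[of p "\<lambda>p. h u \<le> p \<and> (T p = Free \<or> h u \<le> chash h (T p))"]
    unfolding ins_pos_def by auto
qed

lemma ins_end_spec:
  shows "ins_pos h T u \<le> ins_end h T u"
    and "T (ins_end h T u) = Free \<or> is_tomb (T (ins_end h T u))"
    and "ins_pos h T u \<le> p \<Longrightarrow> p < ins_end h T u \<Longrightarrow> \<exists>k. T p = Key k"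
proof -
  have ex: "\<exists>p. ins_pos h T u \<le> p \<and> (T p = Free \<or> is_tomb (T p))"
    using ex_Free_ge by blast
  show "ins_pos h T u \<le> ins_end h T u" "T (ins_end h T u) = Free \<or> is_tomb (T (ins_end h T u))"
    using LeastI_ex[OF ex] unfolding ins_end_def by auto
  show "ins_pos h T u \<le> p \<Longrightarrow> p < ins_end h T u \<Longrightarrow> \<exists>k. T p = Key k"
    using not_less_Least[of p "\<lambda>p. ins_pos h T u \<le> p \<and> (T p = Free \<or> is_tomb (T p))"]
    unfolding ins_end_def by (metis cell.exhaust is_tomb.simps(1))
qed

lemma ins_end_hash_ge:
  assumes "T (ins_end h T u) \<noteq> Free"
  shows "h u \<le> chash h (T (ins_end h T u))"
proof -
  have "\<And>m. ins_pos h T u \<le> m \<Longrightarrow> m \<le> ins_end h T u \<Longrightarrow> T m \<noteq> Free"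
    using assms ins_end_spec(3) by (metis cell.distinct(1) le_neq_implies_less)
  then have "chash h (T (ins_pos h T u)) \<le> chash h (T (ins_end h T u))"
    using ins_end_spec(1) by (intro wf_table_sorted_run)
  moreover have "h u \<le> chash h (T (ins_pos h T u))"
    using ins_pos_spec(2) ins_end_spec(1) \<open>\<And>m. _ \<Longrightarrow> _ \<Longrightarrow> T m \<noteq> Free\<close> by blast
  ultimately show ?thesis by linarith
qed

lemma insert_tbl_at_pos: "insert_tbl h T u (ins_pos h T u) = Key u"
  using ins_end_spec(1)[of u] unfolding insert_tbl_def Let_def by auto

lemma insert_tbl_key_between:
  assumes "ins_pos h T u \<le> p" and "p \<le> ins_end h T u"
  shows "\<exists>k. insert_tbl h T u p = Key k"
proof (cases "p = ins_pos h T u")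
  case False
  then have "insert_tbl h T u p = T (p - 1)" using assms unfolding insert_tbl_def Let_def by auto
  then show ?thesis using assms False ins_end_spec(3)[of u "p - 1"] by auto
qed (use insert_tbl_at_pos in auto)

lemma insert_tbl_Free_iff: "insert_tbl h T u p = Free \<longleftrightarrow> T p = Free \<and> p \<noteq> ins_end h T u"
proof (cases "ins_pos h T u \<le> p \<and> p \<le> ins_end h T u")
  case True
  then show ?thesis using insert_tbl_key_between ins_end_spec(3)[of u p] by fastforce
next
  case False
  then show ?thesis using ins_end_spec(1)[of u] unfolding insert_tbl_def Let_def by auto
qed

lemma insert_tbl_reach:
  assumes "insert_tbl h T u p \<noteq> Free"
  shows "chash h (insert_tbl h T u p) \<le> p
    \<and> (\<forall>q. chash h (insert_tbl h T u p) \<le> q \<and> q \<le> p \<longrightarrow> insert_tbl h T u q \<noteq> Free)"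
proof -
  let ?j = "ins_pos h T u" and ?e = "ins_end h T u" and ?T = "insert_tbl h T u"
  have mono: "T q \<noteq> Free \<Longrightarrow> ?T q \<noteq> Free" for q
    using insert_tbl_Free_iff by blast
  consider "p < ?j \<or> ?e < p" | "p = ?j" | "?j < p" "p \<le> ?e" by linarith
  then show ?thesis
  proof cases
    case 1
    then have "?T p = T p" "T p \<noteq> Free"
      using insert_tbl_outside assms insert_tbl_Free_iff by metis+
    then show ?thesis using wf_table_hash_le wf_table_probe mono by metis
  next
    case 2
    have "?T q \<noteq> Free" if "h u \<le> q" "q \<le> ?j" for q
      using that ins_pos_spec(3) mono insert_tbl_at_pos by (cases "q = ?j") auto
    then show ?thesis using 2 insert_tbl_at_pos ins_pos_spec(1) by simp
  next
    case 3
    have "?j \<le> p - 1" "p - 1 < ?e" using 3 by auto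
    then have old: "?T p = T (p - 1)" "T (p - 1) \<noteq> Free"
      using insert_tbl_shifted[OF 3] ins_end_spec(3)[of u "p - 1"] by auto
    have "?T q \<noteq> Free" if "chash h (T (p - 1)) \<le> q" "q \<le> p" for q
      using that assms wf_table_probe[OF old(2)] mono by (cases "q = p") auto
    then show ?thesis using old wf_table_hash_le[OF old(2)] by auto
  qed
qed

lemma insert_tbl_sorted:
  assumes "insert_tbl h T u p \<noteq> Free" and "insert_tbl h T u (Suc p) \<noteq> Free"
  shows "chash h (insert_tbl h T u p) \<le> chash h (insert_tbl h T u (Suc p))"
proof -
  let ?j = "ins_pos h T u" and ?e = "ins_end h T u" and ?T = "insert_tbl h T u"
  have nf: "?T q \<noteq> Free \<Longrightarrow> q \<noteq> ?e \<Longrightarrow> T q \<noteq> Free" for q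
    using insert_tbl_Free_iff by blast
  have key: "?j \<le> q \<Longrightarrow> q < ?e \<Longrightarrow> T q \<noteq> Free" for q
    using ins_end_spec(3) by fastforce
  have old: "?T q = T q" if "q < ?j \<or> ?e < q" for q using insert_tbl_outside that .
  have shifted: "?T q = T (q - 1)" if "?j < q" "q \<le> ?e" for q using insert_tbl_shifted that .
  consider "Suc p < ?j \<or> ?e < p" | "Suc p = ?j" | "p = ?j" | "?j < p" "p < ?e" | "?j < p" "p = ?e"
    by linarith
  then show ?thesis
  proof cases
    case 1
    then show ?thesis using old[of p] old[of "Suc p"] assms nf wf_table_sorted by auto
  next
    case 2
    have "T p \<noteq> Free" using assms(1) old[of p] nf 2 ins_end_spec(1)[of u] by simp
    have "chash h (T p) \<le> h u"
    proof (cases "h u \<le> p")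
      case True
      then show ?thesis using ins_pos_spec(3)[OF True] 2 by simp
    next
      case False
      then show ?thesis using wf_table_hash_le[OF \<open>T p \<noteq> Free\<close>] by simp
    qed
    then show ?thesis using 2 old[of p] insert_tbl_at_pos by simp
  next
    case 3
    have "h u \<le> chash h (?T (Suc p))"
    proof (cases "?j < ?e")
      case True
      then show ?thesis using 3 shifted[of "Suc p"] key[of ?j] ins_pos_spec(2)[of u] by auto
    next
      case False
      then have e: "?e = p" using 3 ins_end_spec(1)[of u] by simp
      then have "T (Suc p) \<noteq> Free" "?T (Suc p) = T (Suc p)" using assms(2) nf old by auto
      moreover have "h u \<le> chash h (T (Suc p))"
      proof (cases "T p = Free")
        case True
        then show ?thesis
          using wf_table_run_start \<open>T (Suc p) \<noteq> Free\<close> ins_pos_spec(1)[of u] 3 by fastforce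
      next
        case False
        then have "h u \<le> chash h (T p)" using 3 ins_pos_spec(2)[of u] by simp
        also have "\<dots> \<le> chash h (T (Suc p))"
          using wf_table_sorted[OF False \<open>T (Suc p) \<noteq> Free\<close>] .
        finally show ?thesis .
      qed
      ultimately show ?thesis by simp
    qed
    then show ?thesis using 3 insert_tbl_at_pos by simp
  next
    case 4
    then show ?thesis using shifted[of p] shifted[of "Suc p"] key wf_table_sorted_run[of "p - 1" p] by auto
  next
    case 5
    have prev: "?T p = T (p - 1)" "T (p - 1) \<noteq> Free" using 5 shifted key by auto
    have next_: "?T (Suc p) = T (Suc p)" "T (Suc p) \<noteq> Free" using 5 old assms(2) nf by auto
    show ?thesis
    proof (cases "T p = Free")
      case True
      then show ?thesis using prev next_ wf_table_hash_le[OF prev(2)] wf_table_run_start by fastforce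
    next
      case False
      have "chash h (T (p - 1)) \<le> chash h (T p)"
        using wf_table_sorted[OF prev(2)] False 5 by simp
      also have "\<dots> \<le> chash h (T (Suc p))" using wf_table_sorted[OF False next_(2)] .
      finally show ?thesis using prev next_ by simp
    qed
  qed
qed

lemma insert_tbl_distinct:
  assumes "\<not> in_table T u" and "insert_tbl h T u p = Key k" and "insert_tbl h T u q = Key k"
  shows "p = q"
proof -
  let ?j = "ins_pos h T u" and ?e = "ins_end h T u" and ?T = "insert_tbl h T u"
  define orig where "orig p = (if ?j < p \<and> p \<le> ?e then p - 1 else p)" for p
  have orig: "?T p = T (orig p)" if "p \<noteq> ?j" for p
  proof (cases "?j < p \<and> p \<le> ?e")
    case True
    then show ?thesis using insert_tbl_shifted[of h T u p] unfolding orig_def by simp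
  next
    case False
    then have "p < ?j \<or> ?e < p" using that by auto
    then show ?thesis using insert_tbl_outside[of p h T u] False unfolding orig_def by auto
  qed
  show ?thesis
  proof (cases "p = ?j \<or> q = ?j")
    case True
    then have "k = u" using assms(2,3) insert_tbl_at_pos by auto
    then have "p = ?j" "q = ?j"
      using assms orig unfolding in_table_def by metis+
    then show ?thesis by simp
  next
    case False
    then have "T (orig p) = Key k" "T (orig q) = Key k" using assms(2,3) orig by auto
    then have "orig p = orig q" by (rule wf_table_distinct)
    then show ?thesis
      using False ins_end_spec(1)[of u] unfolding orig_def by (auto split: if_splits)
  qed
qed

lemma wf_insert_tbl: "\<not> in_table T u \<Longrightarrow> wf_table h (insert_tbl h T u)"
proof -
  assume absent: "\<not> in_table T u"
  have "{p. insert_tbl h T u p \<noteq> Free} = insert (ins_end h T u) {p. T p \<noteq> Free}"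
    using insert_tbl_Free_iff by blast
  then have "finite {p. insert_tbl h T u p \<noteq> Free}" using wf_table_finite by simp
  then show ?thesis
    unfolding wf_table_def using insert_tbl_reach insert_tbl_sorted insert_tbl_distinct[OF absent]
    by blast
qed

end

lemma wf_delete_tbl:
  assumes wf: "wf_table h T"
  shows "wf_table h (delete_tbl h T u)"
proof -
  have "delete_tbl h T u p = Free \<longleftrightarrow> T p = Free" "chash h (delete_tbl h T u p) = chash h (T p)"
    "delete_tbl h T u p = Key k \<Longrightarrow> T p = Key k" for p k
    unfolding delete_tbl_def by (auto split: if_splits)
  then show ?thesis using wf unfolding wf_table_def by (smt (verit) Collect_cong)
qed

lemma wf_table_init:
  assumes "valid_init n h T0"
  shows "wf_table h T0"
proof -
  have "{p. T0 p \<noteq> Free} \<subseteq> {..n}"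
    using assms unfolding valid_init_def by (auto simp: not_less[symmetric])
  then have "finite {p. T0 p \<noteq> Free}" by (rule finite_subset) simp
  then show ?thesis using assms unfolding valid_init_def wf_table_def by blast
qed

lemma state_before_Suc:
  "t < length S \<Longrightarrow> state_before h T0 S (Suc t) = step h (state_before h T0 S t) (S ! t)"
  unfolding state_before_def by (simp add: take_Suc_conv_app_nth)

lemma wf_state_before:
  assumes "valid_init n h T0" and "valid_ops h T0 S" and "t \<le> length S"
  shows "wf_table h (state_before h T0 S t)"
  using assms(3)
proof (induction t)
  case 0
  then show ?case using wf_table_init[OF assms(1)] by (simp add: state_before_def)
next
  case (Suc t)
  then have t: "t < length S" and wf: "wf_table h (state_before h T0 S t)" by simp_all
  show ?case
  proof (cases "S ! t")
    case (Ins u)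
    then have "\<not> in_table (state_before h T0 S t) u"
      using assms(2) t unfolding valid_ops_def by fastforce
    then show ?thesis using wf_insert_tbl[OF wf] state_before_Suc[OF t] Ins by simp
  next
    case (Del u)
    then show ?thesis using wf_delete_tbl[OF wf] state_before_Suc[OF t] by simp
  qed
qed

definition gaps :: "('k \<Rightarrow> nat) \<Rightarrow> 'k table \<Rightarrow> nat \<Rightarrow> nat \<Rightarrow> nat set" where
  "gaps h T x s = {p. (T p = Free \<and> x \<le> p \<and> p < s)
     \<or> (is_tomb (T p) \<and> x \<le> chash h (T p) \<and> chash h (T p) < s)}"

definition crosses :: "('k \<Rightarrow> nat) \<Rightarrow> 'k table \<Rightarrow> 'k \<Rightarrow> nat \<Rightarrow> bool" where
  "crosses h T u s \<longleftrightarrow> (let e = ins_end h T u in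
     (is_tomb (T e) \<and> s \<le> chash h (T e)) \<or> (T e = Free \<and> s \<le> e))"

lemma finite_gaps: "finite {p. T p \<noteq> Free} \<Longrightarrow> finite (gaps h T x s)"
  by (rule finite_subset[of _ "{..<s} \<union> {p. T p \<noteq> Free}"]) (auto simp: gaps_def elim: is_tomb.elims)

lemma gaps_antimono: "x \<le> y \<Longrightarrow> gaps h T y s \<subseteq> gaps h T x s"
  unfolding gaps_def by auto

lemma Key_notin_gaps: "T p = Key k \<Longrightarrow> p \<notin> gaps h T x s"
  unfolding gaps_def by simp

context
  fixes h :: "'k \<Rightarrow> nat" and T :: "'k table"
  assumes wf: "wf_table h T"
begin

lemma gaps_insert_tbl: "gaps h (insert_tbl h T u) x s = gaps h T x s - {ins_end h T u}"
proof (intro set_eqI)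
  fix p
  show "p \<in> gaps h (insert_tbl h T u) x s \<longleftrightarrow> p \<in> gaps h T x s - {ins_end h T u}"
  proof (cases "ins_pos h T u \<le> p \<and> p \<le> ins_end h T u")
    case True
    have "p \<notin> gaps h T x s - {ins_end h T u}"
      using True ins_end_spec(3)[OF wf, of u p] Key_notin_gaps by fastforce
    moreover have "p \<notin> gaps h (insert_tbl h T u) x s"
      using True insert_tbl_key_between[OF wf] Key_notin_gaps by metis
    ultimately show ?thesis by blast
  next
    case False
    then have "insert_tbl h T u p = T p" "p \<noteq> ins_end h T u"
      using insert_tbl_outside[of p h T u] ins_end_spec(1)[OF wf, of u] by auto
    then show ?thesis unfolding gaps_def by simp
  qed
qed

lemma ins_end_in_gaps:
  assumes "x \<le> h u" and "h u < s" and "\<not> crosses h T u s"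
  shows "ins_end h T u \<in> gaps h T x s"
proof (cases "T (ins_end h T u) = Free")
  case True
  then show ?thesis
    using assms ins_end_spec(1)[OF wf, of u] ins_pos_spec(1)[OF wf, of u]
    unfolding gaps_def crosses_def Let_def by auto
next
  case False
  then show ?thesis
    using assms ins_end_hash_ge[OF wf False] ins_end_spec(2)[OF wf, of u]
    unfolding gaps_def crosses_def Let_def by auto
qed

lemma card_gaps_insert_tbl_le: "card (gaps h (insert_tbl h T u) x s) \<le> card (gaps h T x s)"
  unfolding gaps_insert_tbl by (rule card_Diff1_le)

lemma card_gaps_insert_tbl_less:
  assumes "x \<le> h u" and "h u < s" and "\<not> crosses h T u s"
  shows "card (gaps h (insert_tbl h T u) x s) < card (gaps h T x s)"
  unfolding gaps_insert_tbl
  using finite_gaps[OF wf_table_finite[OF wf]] ins_end_in_gaps[OF assms] by (rule card_Diff1_less)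

lemma card_gaps_delete_tbl_le: "card (gaps h (delete_tbl h T u) x s) \<le> Suc (card (gaps h T x s))"
proof -
  let ?K = "{p. T p = Key u}"
  have fin: "finite ?K" by (rule finite_subset[OF _ wf_table_finite[OF wf]]) auto
  have "card (gaps h (delete_tbl h T u) x s) \<le> card (gaps h T x s \<union> ?K)"
    using finite_gaps[OF wf_table_finite[OF wf]] fin
    by (intro card_mono) (auto simp: gaps_def delete_tbl_def)
  also have "\<dots> \<le> card (gaps h T x s) + card ?K" by (rule card_Un_le)
  also have "card ?K \<le> 1"
    using card_le_Suc0_iff_eq[OF fin] wf_table_distinct[OF wf] by auto
  finally show ?thesis by simp
qed

end

lemma gaps_delete_tbl_outside:
  "\<not> (x \<le> h u \<and> h u < s) \<Longrightarrow> gaps h (delete_tbl h T u) x s = gaps h T x s"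
  unfolding gaps_def delete_tbl_def by auto

abbreviation op_hash :: "('k \<Rightarrow> nat) \<Rightarrow> 'k op list \<Rightarrow> nat \<Rightarrow> nat" where
  "op_hash h S t \<equiv> h (op_key (S ! t))"

definition threshold :: "('k \<Rightarrow> nat) \<Rightarrow> 'k op list \<Rightarrow> nat \<Rightarrow> nat set \<Rightarrow> nat \<Rightarrow> nat" where
  "threshold h S s S' t = Min (insert s (op_hash h S ` {t'\<in>S'. t \<le> t'}))"

lemma finite_S_P: "finite (S_P h S r s)"
  by (rule finite_subset[of _ "{..<length S}"]) (auto simp: S_P_def)

context
  fixes h :: "'k \<Rightarrow> nat" and S :: "'k op list" and r s :: nat and S' :: "nat set"
  assumes dc: "downward_closed h S r s S'"
begin

lemma downward_closed_subset: "S' \<subseteq> S_P h S r s"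
  using dc unfolding downward_closed_def by blast

lemma downward_closed_finite: "finite S'"
  using finite_subset[OF downward_closed_subset finite_S_P] .

lemma threshold_mono: "threshold h S s S' t \<le> threshold h S s S' (Suc t)"
  unfolding threshold_def using downward_closed_finite by (intro Min_antimono) auto

lemma threshold_le_op_hash: "t \<in> S' \<Longrightarrow> threshold h S s S' t \<le> op_hash h S t"
  unfolding threshold_def using downward_closed_finite by (intro Min_le) auto

lemma threshold_ge: "r \<le> s \<Longrightarrow> r \<le> threshold h S s S' t"
  unfolding threshold_def using downward_closed_finite downward_closed_subset
  by (subst Min_ge_iff) (auto simp: S_P_def)

lemma mem_if_threshold_le_op_hash:
  assumes "t \<in> S_P h S r s" and "threshold h S s S' t \<le> op_hash h S t"
  shows "t \<in> S'"
proof -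
  have "threshold h S s S' t \<in> insert s (op_hash h S ` {t'\<in>S'. t \<le> t'})"
    unfolding threshold_def using downward_closed_finite by (intro Min_in) auto
  moreover have "threshold h S s S' t \<noteq> s" using assms unfolding S_P_def by auto
  ultimately obtain t' where "t' \<in> S'" "t \<le> t'" "threshold h S s S' t = op_hash h S t'" by auto
  then show ?thesis
    using dc assms unfolding downward_closed_def by (cases "t = t'") auto
qed

end

lemma telescoping_le:
  fixes a b c :: "nat \<Rightarrow> 'a :: ordered_ab_semigroup_monoid_add_imp_le"
  assumes "\<And>t. t < N \<Longrightarrow> a (Suc t) + b t \<le> a t + c t"
  shows "a N + (\<Sum>t<N. b t) \<le> a 0 + (\<Sum>t<N. c t)"
  using assms
proof (induction N)
  case (Suc N)
  have "a (Suc N) + (\<Sum>t<Suc N. b t) + a N = (a (Suc N) + b N) + (a N + (\<Sum>t<N. b t))"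
    by (simp add: ac_simps)
  also have "\<dots> \<le> (a N + c N) + (a 0 + (\<Sum>t<N. c t))"
    using Suc by (intro add_mono[of "a (Suc N) + b N"]) auto
  also have "\<dots> = a 0 + (\<Sum>t<Suc N. c t) + a N"
    by (simp add: ac_simps)
  finally show ?case by (rule add_le_imp_le_right)
qed simp

lemma insertion_surplus_attained:
  "\<exists>S'. downward_closed h S r s S' \<and> insertion_surplus h T0 S r s
      = subset_surplus S S' - int (card {p. r \<le> p \<and> p < s \<and> T0 p = Free})"
proof -
  let ?D = "{S'. downward_closed h S r s S'}"
  have "finite ?D"
    using finite_S_P by (rule finite_subset[rotated, OF finite_Pow_iff[THEN iffD2]])
      (auto simp: downward_closed_def)
  moreover have "{} \<in> ?D" unfolding downward_closed_def by simp
  ultimately have "Max (subset_surplus S ` ?D) \<in> subset_surplus S ` ?D" by (intro Max_in) auto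
  then show ?thesis unfolding insertion_surplus_def by auto
qed

lemma card_crossing_ins_le_crossing:
  assumes "downward_closed h S r s S'"
  shows "card {t\<in>S'. is_ins (S ! t) \<and> crosses h (state_before h T0 S t) (op_key (S ! t)) s}
    \<le> crossing h T0 S s"
  unfolding crossing_def
  using downward_closed_subset[OF assms]
  by (intro card_mono) (auto simp: S_P_def crosses_def Let_def)

context
  fixes n :: nat and h :: "'k \<Rightarrow> nat" and T0 :: "'k table" and S :: "'k op list"
    and r s :: nat and S' :: "nat set"
  assumes init: "valid_init n h T0" and ops: "valid_ops h T0 S"
    and dc: "downward_closed h S r s S'" and "r \<le> s"
begin

lemma card_gaps_op:
  assumes "t < length S"
  defines "T \<equiv> state_before h T0 S t" and "x \<equiv> threshold h S s S' t"
  shows "card (gaps h (step h T (S ! t)) x s) + of_bool (t \<in> S' \<and> is_ins (S ! t))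
    \<le> card (gaps h T x s) + of_bool (t \<in> S' \<and> \<not> is_ins (S ! t))
      + of_bool (t \<in> S' \<and> is_ins (S ! t) \<and> crosses h T (op_key (S ! t)) s)"
proof -
  have wf: "wf_table h T" using wf_state_before[OF init ops] assms(1) unfolding T_def by simp
  show ?thesis
  proof (cases "S ! t")
    case (Ins u)
    show ?thesis
    proof (cases "t \<in> S' \<and> \<not> crosses h T u s")
      case True
      then have "x \<le> h u" "h u < s"
        using threshold_le_op_hash[OF dc] downward_closed_subset[OF dc] Ins
        unfolding x_def S_P_def by force+
      then show ?thesis using card_gaps_insert_tbl_less[OF wf, of x u s] True Ins by simp
    next
      case False
      then show ?thesis using card_gaps_insert_tbl_le[OF wf] Ins by auto
    qed
  next
    case (Del u)
    show ?thesis
    proof (cases "t \<in> S'")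
      case True
      then show ?thesis using card_gaps_delete_tbl_le[OF wf] Del by simp
    next
      case False
      have "\<not> (x \<le> h u \<and> h u < s)"
      proof
        assume hu: "x \<le> h u \<and> h u < s"
        then have "t \<in> S_P h S r s"
          using threshold_ge[OF dc \<open>r \<le> s\<close>, of t] assms(1) Del unfolding x_def S_P_def by simp
        then have "t \<in> S'" using mem_if_threshold_le_op_hash[OF dc] hu Del unfolding x_def by simp
        with False show False ..
      qed
      then show ?thesis using gaps_delete_tbl_outside[of x h u s T] False Del by simp
    qed
  qed
qed

lemma card_gaps_step:
  assumes "t < length S"
  shows "card (gaps h (state_before h T0 S (Suc t)) (threshold h S s S' (Suc t)) s)
      + of_bool (t \<in> S' \<and> is_ins (S ! t))
    \<le> card (gaps h (state_before h T0 S t) (threshold h S s S' t) s)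
      + of_bool (t \<in> S' \<and> \<not> is_ins (S ! t))
      + of_bool (t \<in> S' \<and> is_ins (S ! t) \<and> crosses h (state_before h T0 S t) (op_key (S ! t)) s)"
proof -
  let ?T' = "state_before h T0 S (Suc t)"
  have "gaps h ?T' (threshold h S s S' (Suc t)) s \<subseteq> gaps h ?T' (threshold h S s S' t) s"
    using threshold_mono[OF dc] by (rule gaps_antimono)
  then have "card (gaps h ?T' (threshold h S s S' (Suc t)) s)
      \<le> card (gaps h ?T' (threshold h S s S' t) s)"
    using finite_gaps[OF wf_table_finite[OF wf_state_before[OF init ops]]] assms
    by (intro card_mono) auto
  then show ?thesis using card_gaps_op[OF assms] state_before_Suc[OF assms] by simp
qed

lemma card_ins_le_free_del_crossing:
  "card {t\<in>S'. is_ins (S ! t)}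
    \<le> card {p. r \<le> p \<and> p < s \<and> T0 p = Free} + card {t\<in>S'. \<not> is_ins (S ! t)}
      + card {t\<in>S'. is_ins (S ! t) \<and> crosses h (state_before h T0 S t) (op_key (S ! t)) s}"
proof -
  let ?g = "\<lambda>t. card (gaps h (state_before h T0 S t) (threshold h S s S' t) s)"
  have "?g (length S) + (\<Sum>t<length S. of_bool (t \<in> S' \<and> is_ins (S ! t)))
    \<le> ?g 0 + (\<Sum>t<length S. of_bool (t \<in> S' \<and> \<not> is_ins (S ! t))
      + of_bool (t \<in> S' \<and> is_ins (S ! t) \<and> crosses h (state_before h T0 S t) (op_key (S ! t)) s))"
    using card_gaps_step by (intro telescoping_le) (simp add: add.assoc)
  moreover have "?g 0 \<le> card {p. r \<le> p \<and> p < s \<and> T0 p = Free}"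
  proof -
    have "\<not> is_tomb (T0 p)" for p using init unfolding valid_init_def by blast
    then have "gaps h T0 r s = {p. r \<le> p \<and> p < s \<and> T0 p = Free}" unfolding gaps_def by auto
    moreover have "gaps h T0 (threshold h S s S' 0) s \<subseteq> gaps h T0 r s"
      using threshold_ge[OF dc \<open>r \<le> s\<close>] by (rule gaps_antimono)
    ultimately show ?thesis
      using finite_gaps[OF wf_table_finite[OF wf_table_init[OF init]]]
      by (simp add: state_before_def card_mono)
  qed
  moreover have "{..<length S} \<inter> {t. t \<in> S' \<and> P t} = {t\<in>S'. P t}" for P
    using downward_closed_subset[OF dc] unfolding S_P_def by auto
  ultimately show ?thesis by (simp add: sum.distrib)
qed

end

theorem mainTheorem8:
  fixes n :: nat and h :: "'k \<Rightarrow> nat" and T0 :: "'k table" and S :: "'k op list"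
    and r s :: nat and q :: int
  assumes "\<forall>k. 1 \<le> h k \<and> h k \<le> n"
    and "valid_init n h T0"
    and "valid_ops h T0 S"
    and "1 \<le> r" and "r \<le> s" and "s \<le> n + 1"
    and "insertion_surplus h T0 S r s = q"
  shows "int (crossing h T0 S s) \<ge> q"
proof -
  \<comment> \<open>Only r \<le> s is needed: slots beyond n are ordinary free slots of the table.\<close>
  obtain S' where dc: "downward_closed h S r s S'"
    and q: "q = subset_surplus S S' - int (card {p. r \<le> p \<and> p < s \<and> T0 p = Free})"
    using insertion_surplus_attained assms(7) by metis
  show ?thesis
    using card_ins_le_free_del_crossing[OF assms(2,3) dc assms(5)]
      card_crossing_ins_le_crossing[OF dc, of T0] q
    unfolding subset_surplus_def by (auto simp: max_def)
qed

end
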